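(* Let $a,b\in\mathbb{R}$ satisfy $\frac13<a-b<\frac4{\pi^2}$ and $\frac12<a\le\frac2\pi-b$. Suppose moreover that $16ab(b-a)+(a+b)^2>0$ and that \[ x_2=\frac{(a+b)(2b-2a+1)+\sqrt{16ab(b-a)+(a+b)^2}}{2(a-b)^2}\in(0,1). \] Then for all $x\in(0,1)$, \[ \arccos x\ge \frac{(1+x_2)^{b+1/2}(1-x_2)^{1/2-a}}{a+b+(a-b)x_2}\cdot\frac{(1-x)^a}{(1+x)^b}. \]
   Context: $\arccos$ denotes the principal inverse cosine with values in $[0,\pi]$. *)

theory Defs
  imports Complex_Main
begin

end

theory Submission
  imports Defs
begin

(*
  Write s = a + b, d = a - b and lin t = s + d t.  For -1 < t < 1 consider
    gap t       = arccos t - sqrt (1 - t^2) / lin t,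
    log_ratio t = ln (arccos t) + b ln (1 + t) - a ln (1 - t),
    log_bound t = (b + 1/2) ln (1 + t) + (1/2 - a) ln (1 - t) - ln (lin t).
  The claimed inequality is log_ratio x >= log_bound x2.  The three derivatives
    gap'       = - quad / (sqrt (1 - t^2) lin^2),
    log_bound' = quad / ((1 - t^2) lin),
    log_ratio' = lin gap / ((1 - t^2) arccos)
  are all governed by the quadratic quad t = d^2 (t - x1)(t - x2), with x1 < x2.
  Hence log_bound is minimal on (x1, 1) at x2; gap decreases to gap 1 = 0 on
  [x2, 1], so gap > 0 there; and since gap 0 <= 0, gap c >= 0 forces c > x1.
  Where gap c >= 0 we directly have log_ratio c >= log_bound c >= log_bound x2.
  Where gap x < 0, the minimum of log_ratio on [x, x2] is attained at a point c
  with gap c >= 0 (a critical point or x2 itself), which reduces to the first case.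
*)

lemma min_right_of_decreasing_start:
  fixes f f' :: "real \<Rightarrow> real"
  assumes "x < y"
    and deriv: "\<And>t. x \<le> t \<Longrightarrow> t \<le> y \<Longrightarrow> DERIV f t :> f' t"
    and start: "f' x < 0"
  obtains c where "x < c" "c \<le> y" "f c \<le> f x" "c < y \<Longrightarrow> f' c = 0"
proof -
  have "\<forall>t. x \<le> t \<and> t \<le> y \<longrightarrow> isCont f t"
    using deriv DERIV_isCont by blast
  then obtain c where c: "x \<le> c" "c \<le> y" and min: "\<And>t. x \<le> t \<Longrightarrow> t \<le> y \<Longrightarrow> f c \<le> f t"
    using isCont_eq_Lb[OF less_imp_le[OF \<open>x < y\<close>]] by metis
  have "x \<noteq> c"
  proof
    assume "x = c"
    obtain e where e: "0 < e" "\<And>h. 0 < h \<Longrightarrow> h < e \<Longrightarrow> f (x + h) < f x"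
      using DERIV_neg_dec_right[OF deriv[of x] start] \<open>x < y\<close> by auto
    define h where "h = min (e / 2) (y - x)"
    have "0 < h" "h < e" using e \<open>x < y\<close> by (auto simp: h_def)
    then have "f (x + h) < f c" using e \<open>x = c\<close> by simp
    moreover have "f c \<le> f (x + h)" using min \<open>0 < h\<close> by (auto simp: h_def)
    ultimately show False by simp
  qed
  moreover have "f' c = 0" if "c < y"
  proof (rule DERIV_local_min[OF deriv[OF c]])
    show "0 < min (c - x) (y - c)" using \<open>x \<noteq> c\<close> c that by simp
    show "\<forall>t. \<bar>c - t\<bar> < min (c - x) (y - c) \<longrightarrow> f c \<le> f t"
      using min by (auto simp: abs_less_iff)
  qed
  ultimately show thesis
    using that[of c] c min[of x] by auto
qed

lemma quadratic_factor:
  fixes e p D t :: real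
  assumes "e \<noteq> 0" "0 \<le> D"
  shows "e * t^2 - p * t + (p^2 - D) / (4 * e)
       = e * (t - (p - sqrt D) / (2 * e)) * (t - (p + sqrt D) / (2 * e))"
  using assms by (simp add: field_simps power2_eq_square)

text \<open>pi >= 3 from sin (pi/6) = 1/2 <= pi/6; used to get a - b < 4/pi^2 < 1/2.\<close>

lemma pi_ge_3: "3 \<le> pi"
  using sin_x_le_x[of "pi / 6"] by (simp add: sin_30)

lemma square_less_1: "-1 < t \<Longrightarrow> t < (1::real) \<Longrightarrow> t^2 < 1"
  by (simp add: abs_square_less_1 abs_less_iff)

text \<open>The auxiliary functions, for parameters with d = a - b > 0 and b > 0; this
  makes lin positive on (-1, 1], so all functions are smooth on (-1, 1).\<close>

locale arccos_lower_bound =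
  fixes a b :: real
  assumes slope_pos: "0 < a - b" and b_pos: "0 < b"
begin

definition lin :: "real \<Rightarrow> real" where
  "lin t = a + b + (a - b) * t"

definition quad :: "real \<Rightarrow> real" where
  "quad t = (a - b)^2 * t^2 + (a + b) * (2 * (a - b) - 1) * t + (a + b)^2 - (a - b)"

definition gap :: "real \<Rightarrow> real" where
  "gap t = arccos t - sqrt (1 - t^2) / lin t"

definition log_ratio :: "real \<Rightarrow> real" where
  "log_ratio t = ln (arccos t) + b * ln (1 + t) - a * ln (1 - t)"

definition log_bound :: "real \<Rightarrow> real" where
  "log_bound t = (b + 1/2) * ln (1 + t) + (1/2 - a) * ln (1 - t) - ln (lin t)"

lemma lin_pos: "-1 < t \<Longrightarrow> 0 < lin t"
proof -
  assume "-1 < t"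
  then have "(a - b) * (-1) < (a - b) * t" using slope_pos by (intro mult_strict_left_mono)
  then show ?thesis unfolding lin_def using b_pos by simp
qed

lemma lin_deriv: "DERIV lin t :> a - b"
  unfolding lin_def by (auto intro!: derivative_eq_intros)

lemma gap_deriv:
  assumes "-1 < t" "t < 1"
  shows "DERIV gap t :> - quad t / (sqrt (1 - t^2) * (lin t)^2)"
proof -
  define r where "r = sqrt (1 - t^2)"
  have r: "0 < r" "r^2 = 1 - t^2" using square_less_1[OF assms] by (auto simp: r_def)
  have L: "lin t \<noteq> 0" using lin_pos assms by force
  have "DERIV gap t :> - inverse r - ((inverse r / 2 * (- (2*t))) * lin t - r * (a - b)) / (lin t * lin t)"
    unfolding gap_def r_def
    by (intro DERIV_diff DERIV_divide lin_deriv DERIV_arccos[OF assms, simplified] L)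
       (use r in \<open>auto intro!: derivative_eq_intros simp: r_def\<close>)
  also have "- inverse r - ((inverse r / 2 * (- (2*t))) * lin t - r * (a - b)) / (lin t * lin t)
      = (r^2 * (a - b) + t * lin t - (lin t)^2) / (r * (lin t)^2)"
    using r L by (simp add: field_simps power2_eq_square)
  also have "r^2 * (a - b) + t * lin t - (lin t)^2 = - quad t"
    unfolding r quad_def lin_def by (simp add: algebra_simps power2_eq_square)
  finally show ?thesis by (simp add: r_def)
qed

lemma log_bound_deriv:
  assumes "-1 < t" "t < 1"
  shows "DERIV log_bound t :> quad t / ((1 - t^2) * lin t)"
proof -
  have L: "0 < lin t" using lin_pos assms by simp
  have "DERIV log_bound t :> (b + 1/2) * (1 / (1 + t)) + (1/2 - a) * (- 1 / (1 - t)) - (a - b) / lin t"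
    unfolding log_bound_def using assms L
    by (intro DERIV_diff DERIV_add DERIV_cmult) (auto intro!: derivative_eq_intros lin_deriv)
  also have "(b + 1/2) * (1 / (1 + t)) + (1/2 - a) * (- 1 / (1 - t)) - (a - b) / lin t
      = ((b + 1/2) * (1 - t) * lin t - (1/2 - a) * (1 + t) * lin t - (a - b) * (1 - t^2))
        / ((1 - t^2) * lin t)"
    using assms L square_less_1[OF assms] by (simp add: field_simps power2_eq_square)
  also have "(b + 1/2) * (1 - t) * lin t - (1/2 - a) * (1 + t) * lin t - (a - b) * (1 - t^2) = quad t"
    unfolding lin_def quad_def power2_eq_square by algebra
  finally show ?thesis .
qed

lemma log_ratio_deriv:
  assumes "-1 < t" "t < 1"
  shows "DERIV log_ratio t :> lin t * gap t / ((1 - t^2) * arccos t)"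
proof -
  define r where "r = sqrt (1 - t^2)"
  have r: "0 < r" "r^2 = 1 - t^2" using square_less_1[OF assms] by (auto simp: r_def)
  have A: "0 < arccos t" using arccos_lt_bounded assms by auto
  have L: "0 < lin t" using lin_pos assms by simp
  have "DERIV log_ratio t :> - 1 / (r * arccos t) + b * (1 / (1 + t)) - a * (- 1 / (1 - t))"
    unfolding log_ratio_def r_def using assms A
    by (intro DERIV_diff DERIV_add DERIV_cmult)
       (auto intro!: derivative_eq_intros simp: divide_simps)
  also have "b * (1 / (1 + t)) - a * (- 1 / (1 - t)) = lin t / r^2"
  proof -
    have "r^2 = (1 - t) * (1 + t)" unfolding r(2) by (simp add: algebra_simps power2_eq_square)
    then show ?thesis using assms by (simp add: field_simps lin_def)
  qed
  ultimately have "DERIV log_ratio t :> - 1 / (r * arccos t) + lin t / r^2"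
    by (simp add: algebra_simps)
  also have "- 1 / (r * arccos t) + lin t / r^2 = lin t * (arccos t - r / lin t) / (r^2 * arccos t)"
    using r A L by (simp add: field_simps power2_eq_square)
  finally show ?thesis using r(1) unfolding gap_def r(2)[symmetric] by simp
qed

lemma gap_one: "gap 1 = 0"
  by (simp add: gap_def)

lemma gap_continuous:
  assumes "-1 < y"
  shows "continuous_on {y..1} gap"
proof -
  have "continuous_on {y..1} lin" unfolding lin_def by (intro continuous_intros)
  moreover have "\<forall>t\<in>{y..1}. lin t \<noteq> 0"
  proof
    fix t assume "t \<in> {y..1}"
    then show "lin t \<noteq> 0" using assms lin_pos[of t] by simp
  qed
  ultimately show ?thesis unfolding gap_def using assms
    by (intro continuous_intros continuous_on_subset[OF continuous_on_arccos']) auto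
qed

lemma quad_roots:
  fixes D p :: real
  defines "D \<equiv> 16 * a * b * (b - a) + (a + b)^2" and "p \<equiv> (a + b) * (2 * b - 2 * a + 1)"
  assumes disc_nonneg: "0 \<le> D"
  shows "quad t = (a - b)^2 * (t - (p - sqrt D) / (2 * (a - b)^2)) * (t - (p + sqrt D) / (2 * (a - b)^2))"
proof -
  have "(p^2 - D) / (4 * (a - b)^2) = (a + b)^2 - (a - b)"
  proof -
    have "p^2 - D = 4 * (a - b)^2 * ((a + b)^2 - (a - b))"
      unfolding p_def D_def power2_eq_square by algebra
    then show ?thesis using slope_pos by simp
  qed
  then have "quad t = (a - b)^2 * t^2 - p * t + (p^2 - D) / (4 * (a - b)^2)"
    unfolding quad_def p_def by (simp add: algebra_simps)
  then show ?thesis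
    using quadratic_factor[where e = "(a - b)^2" and p = p and D = D and t = t] slope_pos disc_nonneg
    by simp
qed

text \<open>gap 0 = pi/2 - 1/(a + b), so the hypothesis a + b <= 2/pi makes it nonpositive.\<close>

lemma gap_zero_nonpos: "a + b \<le> 2 / pi \<Longrightarrow> gap 0 \<le> 0"
  using b_pos slope_pos by (simp add: gap_def lin_def field_simps)

text \<open>Where the gap is nonnegative the desired inequality holds pointwise, with
  log_bound evaluated at the same point: this is just ln of arccos t >= sqrt (1 - t^2) / lin t.\<close>

lemma log_bound_le_log_ratio:
  assumes "-1 < t" "t < 1" "0 \<le> gap t"
  shows "log_bound t \<le> log_ratio t"
proof -
  have L: "0 < lin t" using lin_pos assms by simp
  have r: "0 < sqrt (1 - t^2)" using square_less_1[OF assms(1,2)] by simp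
  have "0 < sqrt (1 - t^2) / lin t" using r L by simp
  then have "ln (sqrt (1 - t^2) / lin t) \<le> ln (arccos t)"
    using assms(3) by (simp add: gap_def)
  moreover have "ln (sqrt (1 - t^2) / lin t) = (ln (1 - t) + ln (1 + t)) / 2 - ln (lin t)"
  proof -
    have "1 - t^2 = (1 - t) * (1 + t)" by (simp add: algebra_simps power2_eq_square)
    then show ?thesis using assms r L by (simp add: ln_divide_pos ln_sqrt ln_mult)
  qed
  ultimately show ?thesis unfolding log_bound_def log_ratio_def by (simp add: algebra_simps)
qed

end

locale arccos_lower_bound_roots = arccos_lower_bound +
  fixes x1 x2 :: real
  assumes quad_factor: "\<And>t. quad t = (a - b)^2 * (t - x1) * (t - x2)"
    and roots_order: "x1 < x2"
    and x2_pos: "0 < x2" and x2_lt_1: "x2 < 1"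
    and gap_zero: "gap 0 \<le> 0"
begin

lemma quad_pos_outside:
  assumes "t < x1 \<or> x2 < t"
  shows "0 < quad t"
proof -
  have "0 < (t - x1) * (t - x2)"
    using assms roots_order by (auto intro: mult_pos_pos mult_neg_neg)
  then show ?thesis using slope_pos by (simp add: quad_factor mult.assoc)
qed

lemma quad_neg_between:
  assumes "x1 < t" "t < x2"
  shows "quad t < 0"
proof -
  have "(t - x1) * (t - x2) < 0" using assms by (intro mult_pos_neg) auto
  then show ?thesis using slope_pos by (simp add: quad_factor mult.assoc mult_pos_neg)
qed

lemma gap_deriv_neg:
  assumes "-1 < t" "t < 1" "0 < quad t"
  shows "\<exists>l. DERIV gap t :> l \<and> l < 0"
proof -
  have "0 < sqrt (1 - t^2) * (lin t)^2"
    using square_less_1[OF assms(1,2)] lin_pos[OF assms(1)] by simp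
  then show ?thesis using gap_deriv[OF assms(1,2)] assms(3) by (intro exI conjI) auto
qed

lemma log_bound_deriv_sign:
  assumes "-1 < t" "t < 1"
  shows "\<exists>l. DERIV log_bound t :> l \<and> (quad t < 0 \<longrightarrow> l < 0) \<and> (0 < quad t \<longrightarrow> 0 < l)"
proof -
  have "0 < (1 - t^2) * lin t"
    using square_less_1[OF assms] lin_pos[OF assms(1)] by simp
  then show ?thesis using log_bound_deriv[OF assms]
    by (intro exI conjI) (auto simp: divide_neg_pos)
qed

text \<open>gap decreases on [x2, 1] towards gap 1 = 0, so it is positive on [x2, 1).\<close>

lemma gap_pos_near_one:
  assumes "x2 \<le> y" "y < 1"
  shows "0 < gap y"
proof -
  have "gap 1 < gap y"
  proof (rule DERIV_neg_imp_decreasing_open[OF assms(2)])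
    show "\<exists>l. DERIV gap t :> l \<and> l < 0" if "y < t" "t < 1" for t
      using that assms x2_pos by (intro gap_deriv_neg quad_pos_outside) auto
    show "continuous_on {y..1} gap" using assms x2_pos by (intro gap_continuous) auto
  qed
  then show ?thesis by (simp add: gap_one)
qed

text \<open>gap decreases on [0, x1], starting from gap 0 <= 0; so a point c in (0, 1)
  with nonnegative gap lies to the right of x1.\<close>

lemma nonneg_gap_right_of_x1:
  assumes "0 < c" "c < 1" "0 \<le> gap c"
  shows "x1 < c"
proof (rule ccontr)
  assume "\<not> x1 < c"
  have "gap c < gap 0"
  proof (rule DERIV_neg_imp_decreasing_open[OF assms(1)])
    show "\<exists>l. DERIV gap t :> l \<and> l < 0" if "0 < t" "t < c" for t
      using that assms \<open>\<not> x1 < c\<close> by (intro gap_deriv_neg quad_pos_outside) auto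
    show "continuous_on {0..c} gap"
    proof (rule DERIV_atLeastAtMost_imp_continuous_on)
      show "\<exists>l. DERIV gap t :> l" if "0 \<le> t" "t \<le> c" for t
        using that assms gap_deriv[of t] by auto
    qed
  qed
  then show False using assms(3) gap_zero by simp
qed

lemma log_bound_min:
  assumes "-1 < c" "x1 < c" "c < 1"
  shows "log_bound x2 \<le> log_bound c"
proof -
  have cont: "continuous_on {u..v} log_bound" if "-1 < u" "v < 1" for u v
  proof (rule DERIV_atLeastAtMost_imp_continuous_on)
    show "\<exists>l. DERIV log_bound t :> l" if "u \<le> t" "t \<le> v" for t
      using that \<open>-1 < u\<close> \<open>v < 1\<close> log_bound_deriv[of t] by auto
  qed
  consider "c < x2" | "c = x2" | "x2 < c" by linarith
  then show ?thesis
  proof cases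
    case 1
    have "log_bound x2 < log_bound c"
    proof (rule DERIV_neg_imp_decreasing_open[OF 1 _ cont])
      show "\<exists>l. DERIV log_bound t :> l \<and> l < 0" if "c < t" "t < x2" for t
        using that assms x2_lt_1 log_bound_deriv_sign[of t] quad_neg_between[of t] by auto
    qed (use assms x2_lt_1 in auto)
    then show ?thesis by simp
  next
    case 3
    have "log_bound x2 < log_bound c"
    proof (rule DERIV_pos_imp_increasing_open[OF 3 _ cont])
      show "\<exists>l. DERIV log_bound t :> l \<and> 0 < l" if "x2 < t" "t < c" for t
        using that assms x2_pos log_bound_deriv_sign[of t] quad_pos_outside[of t] by auto
    qed (use assms x2_pos in auto)
    then show ?thesis by simp
  qed simp
qed

lemma log_bound_le_log_ratio_at_nonneg_gap:
  assumes "0 < c" "c < 1" "0 \<le> gap c"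
  shows "log_bound x2 \<le> log_ratio c"
  using log_bound_min[of c] nonneg_gap_right_of_x1[OF assms] log_bound_le_log_ratio[of c] assms
  by auto

text \<open>If gap x < 0, then x < x2 and
  log_ratio decreases at x, so its minimum over [x, x2] sits at a point with
  nonnegative gap: either x2 itself or a critical point, where gap vanishes.\<close>

lemma log_ratio_lower_bound:
  assumes "0 < x" "x < 1"
  shows "log_bound x2 \<le> log_ratio x"
proof (cases "0 \<le> gap x")
  case True
  then show ?thesis using log_bound_le_log_ratio_at_nonneg_gap assms by simp
next
  case False
  define ratio' where "ratio' t = lin t * gap t / ((1 - t^2) * arccos t)" for t
  have denom_pos: "0 < (1 - t^2) * arccos t" if "-1 < t" "t < 1" for t
    using square_less_1[OF that] arccos_lt_bounded[of t] that by simp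
  have "x < x2" using gap_pos_near_one[of x] False assms by force
  moreover have "DERIV log_ratio t :> ratio' t" if "x \<le> t" "t \<le> x2" for t
    unfolding ratio'_def using that assms x2_lt_1 by (intro log_ratio_deriv) auto
  moreover have "ratio' x < 0"
    unfolding ratio'_def using False assms lin_pos[of x] denom_pos[of x]
    by (intro divide_neg_pos mult_pos_neg) auto
  ultimately obtain c where c: "x < c" "c \<le> x2" "log_ratio c \<le> log_ratio x"
    and critical: "c < x2 \<Longrightarrow> ratio' c = 0"
    by (rule min_right_of_decreasing_start) auto
  have "0 \<le> gap c"
  proof (cases "c < x2")
    case True
    have "0 < (1 - c^2) * arccos c" using denom_pos[of c] c assms x2_lt_1 by simp
    then have "lin c * gap c = 0"
      using critical[OF True] unfolding ratio'_def by (metis divide_eq_0_iff less_irrefl)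
    then show ?thesis using lin_pos[of c] c assms by simp
  next
    case False
    then show ?thesis using gap_pos_near_one[of c] c x2_lt_1 by simp
  qed
  then have "log_bound x2 \<le> log_ratio c"
    using c assms x2_lt_1 by (intro log_bound_le_log_ratio_at_nonneg_gap) auto
  with c show ?thesis by simp
qed

lemma arccos_lower_bound:
  assumes "0 < x" "x < 1"
  shows "(1 + x2) powr (b + 1/2) * (1 - x2) powr (1/2 - a) / lin x2
           * ((1 - x) powr a / (1 + x) powr b) \<le> arccos x"
proof -
  have L: "0 < lin x2" using lin_pos x2_pos by simp
  have A: "0 < arccos x" using arccos_lt_bounded assms by simp
  have "ln ((1 + x2) powr (b + 1/2) * (1 - x2) powr (1/2 - a) / lin x2
           * ((1 - x) powr a / (1 + x) powr b))
        = log_bound x2 + a * ln (1 - x) - b * ln (1 + x)"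
    using assms x2_pos x2_lt_1 L by (simp add: log_bound_def ln_mult ln_divide_pos)
  also have "\<dots> \<le> log_ratio x + a * ln (1 - x) - b * ln (1 + x)"
    using log_ratio_lower_bound[OF assms] by simp
  also have "\<dots> = ln (arccos x)" by (simp add: log_ratio_def)
  finally show ?thesis using assms x2_pos x2_lt_1 L A by simp
qed

end

theorem theorem2:
  fixes a b x\<^sub>2 :: real
  assumes h1: "1/3 < a - b" and h2: "a - b < 4 / pi^2"
    and h3: "1/2 < a" and h4: "a \<le> 2/pi - b"
    and hdisc: "16*a*b*(b - a) + (a + b)^2 > 0"
    and hx2: "x\<^sub>2 = ((a + b)*(2*b - 2*a + 1) + sqrt (16*a*b*(b - a) + (a + b)^2)) / (2*(a - b)^2)"
    and hx2I: "0 < x\<^sub>2" "x\<^sub>2 < 1"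
  shows "\<forall>x::real. 0 < x \<and> x < 1 \<longrightarrow>
    arccos x \<ge> ((1 + x\<^sub>2) powr (b + 1/2) * (1 - x\<^sub>2) powr (1/2 - a)) / (a + b + (a - b)*x\<^sub>2)
                 * ((1 - x) powr a / (1 + x) powr b)"
proof -
  define D where "D = 16*a*b*(b - a) + (a + b)^2"
  define p where "p = (a + b)*(2*b - 2*a + 1)"
  have "4 / pi^2 < 1/2"
    using pi_ge_3 power_mono[OF pi_ge_3, of 2] by (simp add: field_simps)
  then interpret arccos_lower_bound a b
    using h1 h2 h3 by unfold_locales linarith+
  interpret arccos_lower_bound_roots a b "(p - sqrt D) / (2 * (a - b)^2)" x\<^sub>2
  proof
    show "quad t = (a - b)^2 * (t - (p - sqrt D) / (2 * (a - b)^2)) * (t - x\<^sub>2)" for t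
      using quad_roots hdisc unfolding hx2 D_def p_def by simp
    show "(p - sqrt D) / (2 * (a - b)^2) < x\<^sub>2"
      using hdisc slope_pos unfolding hx2 D_def p_def by (simp add: divide_strict_right_mono)
    show "gap 0 \<le> 0" using h4 by (intro gap_zero_nonpos) simp
  qed (use hx2I in auto)
  show ?thesis using arccos_lower_bound by (simp add: lin_def)
qed

end
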